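(* Let $G$ be a nilpotent $p$-group ($p$ prime) and let $G_0$ be the set of elements of $G$ of infinite height. Then $G_0$ is a normal subgroup of $G$, and the quotient group $G/G_0$ has no nontrivial elements of infinite height.
   Context: For a nilpotent $p$-group $G$, the height of $g\in G$ is the greatest integer $n\ge 0$ such that $g=h^{p^n}$ for some $h\in G$; if there is no greatest such $n$, $g$ is said to have infinite height. *)

theory Defs
  imports "HOL-Algebra.Algebra"
begin

definition lower_central_step :: "('a, 'b) monoid_scheme \<Rightarrow> 'a set \<Rightarrow> 'a set" where
  "lower_central_step G H = generate G
     {x \<otimes>\<^bsub>G\<^esub> y \<otimes>\<^bsub>G\<^esub> inv\<^bsub>G\<^esub> x \<otimes>\<^bsub>G\<^esub> inv\<^bsub>G\<^esub> y | x y. x \<in> H \<and> y \<in> carrier G}"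

definition nilpotent_group :: "('a, 'b) monoid_scheme \<Rightarrow> bool" where
  "nilpotent_group G \<longleftrightarrow> group G \<and>
     (\<exists>n. (lower_central_step G ^^ n) (carrier G) = {\<one>\<^bsub>G\<^esub>})"

text \<open>p-group: every element has order a power of p (G may be infinite).\<close>
definition p_group :: "('a, 'b) monoid_scheme \<Rightarrow> nat \<Rightarrow> bool" where
  "p_group G p \<longleftrightarrow> group G \<and> (\<forall>g\<in>carrier G. \<exists>k::nat. g [^]\<^bsub>G\<^esub> (p ^ k) = \<one>\<^bsub>G\<^esub>)"

definition infinite_height :: "('a, 'b) monoid_scheme \<Rightarrow> nat \<Rightarrow> 'a \<Rightarrow> bool" where
  "infinite_height G p g \<longleftrightarrow>
     \<not> (\<exists>n. (\<exists>h\<in>carrier G. g = h [^]\<^bsub>G\<^esub> (p ^ n)) \<and>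
            (\<forall>m. (\<exists>h\<in>carrier G. g = h [^]\<^bsub>G\<^esub> (p ^ m)) \<longrightarrow> m \<le> n))"

end

(*
  If the lower central series (indexed from G = gamma_0) reaches 1 at gamma_c, every element
  of the subgroup generated by the (q^c)-th powers is a q-th power.  By induction on c,
  working modulo a normal subgroup M containing gamma_c: the k-th term of the lower central
  series of the subgroup generated by the q-th powers consists of elements congruent, modulo
  gamma_(k+1), to q-th powers of elements of gamma_k, since commutators are multiplicative in
  a central factor.  Applying the induction hypothesis to that subgroup leaves a correction
  by such a q-th power, which is central modulo M and therefore merges with the remaining
  q-th power.

  With q = p^n, a product of two elements of infinite height is a (p^n)-th power for every n,
  so these elements form a normal subgroup G0.  If the coset of g has infinite height in
  G/G0, then g = u h^(p^(nc)) with u in G0, hence g is again a (p^n)-th power for every n,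
  i.e. g lies in G0.
*)
theory Submission
  imports Defs
begin

definition commutator :: "('a, 'b) monoid_scheme \<Rightarrow> 'a \<Rightarrow> 'a \<Rightarrow> 'a" where
  "commutator G x y = x \<otimes>\<^bsub>G\<^esub> y \<otimes>\<^bsub>G\<^esub> inv\<^bsub>G\<^esub> x \<otimes>\<^bsub>G\<^esub> inv\<^bsub>G\<^esub> y"

definition lower_central :: "('a, 'b) monoid_scheme \<Rightarrow> nat \<Rightarrow> 'a set" where
  "lower_central G k = (lower_central_step G ^^ k) (carrier G)"

definition power_subgroup :: "('a, 'b) monoid_scheme \<Rightarrow> nat \<Rightarrow> 'a set" where
  "power_subgroup G q = generate G {x [^]\<^bsub>G\<^esub> q | x. x \<in> carrier G}"

definition powers_modulo :: "('a, 'b) monoid_scheme \<Rightarrow> 'a set \<Rightarrow> 'a set \<Rightarrow> nat \<Rightarrow> 'a set" where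
  "powers_modulo G M A q = {x \<in> carrier G. \<exists>a\<in>A. M #>\<^bsub>G\<^esub> x = M #>\<^bsub>G\<^esub> a [^]\<^bsub>G\<^esub> q}"

lemma lower_central_0 [simp]: "lower_central G 0 = carrier G"
  by (simp add: lower_central_def)

lemma lower_central_Suc:
  "lower_central G (Suc k) =
     generate G {commutator G x y | x y. x \<in> lower_central G k \<and> y \<in> carrier G}"
  by (simp add: lower_central_def lower_central_step_def commutator_def)

lemma (in group_hom) hom_commutator:
  "x \<in> carrier G \<Longrightarrow> y \<in> carrier G \<Longrightarrow> h (commutator G x y) = commutator H (h x) (h y)"
  by (simp add: commutator_def)

context group
begin

lemma l_inv_assoc [simp]: "x \<in> carrier G \<Longrightarrow> y \<in> carrier G \<Longrightarrow> inv x \<otimes> (x \<otimes> y) = y"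
  by (simp add: m_assoc[symmetric])

lemma r_inv_assoc [simp]: "x \<in> carrier G \<Longrightarrow> y \<in> carrier G \<Longrightarrow> x \<otimes> (inv x \<otimes> y) = y"
  by (simp add: m_assoc[symmetric])

lemma commutator_closed [simp]:
  "x \<in> carrier G \<Longrightarrow> y \<in> carrier G \<Longrightarrow> commutator G x y \<in> carrier G"
  by (simp add: commutator_def)

lemma commutator_conj:
  assumes "g \<in> carrier G" "x \<in> carrier G" "y \<in> carrier G"
  shows "g \<otimes> commutator G x y \<otimes> inv g = commutator G (g \<otimes> x \<otimes> inv g) (g \<otimes> y \<otimes> inv g)"
  using assms by (simp add: commutator_def m_assoc inv_mult_group)

lemma commutator_eq_one_imp_commute:
  assumes "x \<in> carrier G" "y \<in> carrier G" "commutator G x y = \<one>"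
  shows "x \<otimes> y = y \<otimes> x"
proof -
  have "x \<otimes> y = commutator G x y \<otimes> (y \<otimes> x)"
    using assms(1,2) by (simp add: commutator_def m_assoc)
  with assms show ?thesis by simp
qed

lemma commutator_central_mult_left:
  assumes "m \<in> carrier G" "b \<in> carrier G" "y \<in> carrier G"
    and central: "\<And>z. z \<in> carrier G \<Longrightarrow> m \<otimes> z = z \<otimes> m"
  shows "commutator G (m \<otimes> b) y = commutator G b y"
proof -
  have "commutator G (m \<otimes> b) y = (m \<otimes> (b \<otimes> y \<otimes> inv b)) \<otimes> inv m \<otimes> inv y"
    using assms by (simp add: commutator_def m_assoc inv_mult_group)
  also have "\<dots> = (b \<otimes> y \<otimes> inv b) \<otimes> m \<otimes> inv m \<otimes> inv y"
    using assms by simp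
  also have "\<dots> = commutator G b y"
    using assms by (simp add: commutator_def m_assoc)
  finally show ?thesis .
qed

lemma commutator_pow_left:
  assumes a: "a \<in> carrier G" and y: "y \<in> carrier G"
    and central: "\<And>z. z \<in> carrier G \<Longrightarrow> commutator G a y \<otimes> z = z \<otimes> commutator G a y"
  shows "commutator G (a [^] (n::nat)) y = commutator G a y [^] n"
proof -
  define c where "c = commutator G a y"
  have c: "c \<in> carrier G"
    using a y by (simp add: c_def)
  have conj_a: "a \<otimes> y \<otimes> inv a = c \<otimes> y"
    using a y by (simp add: c_def commutator_def m_assoc)
  have conj_pow: "a [^] n \<otimes> y \<otimes> inv (a [^] n) = c [^] n \<otimes> y" for n :: nat
  proof (induction n)
    case 0
    then show ?case using y by simp
  next
    case (Suc n)
    have "a [^] Suc n \<otimes> y \<otimes> inv (a [^] Suc n) = a [^] n \<otimes> (a \<otimes> y \<otimes> inv a) \<otimes> inv (a [^] n)"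
      using a y by (simp add: m_assoc inv_mult_group)
    also have "\<dots> = c \<otimes> (a [^] n \<otimes> y \<otimes> inv (a [^] n))"
      using a y c central[of "a [^] n"] by (simp add: conj_a c_def m_assoc[symmetric])
    also have "\<dots> = c [^] Suc n \<otimes> y"
      using c y by (metis Suc m_assoc nat_pow_closed nat_pow_Suc2)
    finally show ?case .
  qed
  have "commutator G (a [^] n) y = (a [^] n \<otimes> y \<otimes> inv (a [^] n)) \<otimes> inv y"
    using a y by (simp add: commutator_def)
  then show ?thesis
    using c y by (simp add: conj_pow c_def m_assoc)
qed

lemma lower_central_normal: "lower_central G k \<lhd> G"
proof (induction k)
  case 0
  then show ?case by (simp add: normal_self)
next
  case (Suc k)
  then interpret N: normal "lower_central G k" G .
  show ?case
    unfolding lower_central_Suc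
  proof (rule normal_generateI)
    show "{commutator G x y | x y. x \<in> lower_central G k \<and> y \<in> carrier G} \<subseteq> carrier G"
      using N.subset by auto
  next
    fix c g
    assume "c \<in> {commutator G x y | x y. x \<in> lower_central G k \<and> y \<in> carrier G}"
      and g: "g \<in> carrier G"
    then obtain x y where c: "c = commutator G x y" and x: "x \<in> lower_central G k"
      and y: "y \<in> carrier G"
      by blast
    have "g \<otimes> c \<otimes> inv g = commutator G (g \<otimes> x \<otimes> inv g) (g \<otimes> y \<otimes> inv g)"
      using c x y g N.subset commutator_conj by blast
    moreover have "g \<otimes> x \<otimes> inv g \<in> lower_central G k"
      using g x by (rule N.inv_op_closed2)
    ultimately show "g \<otimes> c \<otimes> inv g \<in>
        {commutator G x y | x y. x \<in> lower_central G k \<and> y \<in> carrier G}"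
      using g y by blast
  qed
qed

lemma lower_central_subset: "lower_central G k \<subseteq> carrier G"
  using lower_central_normal normal_imp_subgroup subgroup.subset by blast

lemma commutator_in_lower_central:
  "x \<in> lower_central G k \<Longrightarrow> y \<in> carrier G \<Longrightarrow> commutator G x y \<in> lower_central G (Suc k)"
  unfolding lower_central_Suc by (rule generate.incl) blast

lemma rcos_eq_iff_mult_inv:
  assumes H: "subgroup H G" and x: "x \<in> carrier G" and y: "y \<in> carrier G"
  shows "H #> x = H #> y \<longleftrightarrow> x \<otimes> inv y \<in> H"
proof -
  have "H #> x = H #> y \<longleftrightarrow> x \<in> H #> y"
    using rcos_self[OF x H] repr_independence[OF _ y H] by blast
  also have "\<dots> \<longleftrightarrow> x \<otimes> inv y \<in> H"
    using H is_group y x by (rule subgroup.rcos_module)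
  finally show ?thesis .
qed

lemma r_coset_group_hom: "M \<lhd> G \<Longrightarrow> group_hom G (G Mod M) (\<lambda>x. M #> x)"
  unfolding group_hom_def group_hom_axioms_def
  using normal.factorgroup_is_group normal.r_coset_hom_Mod is_group by blast

lemma coset_central_in_FactGroup:
  assumes M: "M \<lhd> G" and x: "x \<in> carrier G"
    and commutators: "\<And>w. w \<in> carrier G \<Longrightarrow> commutator G x w \<in> M"
    and z: "z \<in> carrier (G Mod M)"
  shows "(M #> x) \<otimes>\<^bsub>G Mod M\<^esub> z = z \<otimes>\<^bsub>G Mod M\<^esub> (M #> x)"
proof -
  interpret h: group_hom G "G Mod M" "\<lambda>x. M #> x"
    using M by (rule r_coset_group_hom)
  obtain w where w: "w \<in> carrier G" and z_eq: "z = M #> w"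
    using z by (auto simp: carrier_FactGroup)
  have "M #> commutator G x w = \<one>\<^bsub>G Mod M\<^esub>"
    using normal_imp_subgroup[OF M] commutators[OF w] by (simp add: subgroup.rcos_const)
  then have "commutator (G Mod M) (M #> x) (M #> w) = \<one>\<^bsub>G Mod M\<^esub>"
    using x w by (simp add: h.hom_commutator)
  then show ?thesis
    unfolding z_eq using x w by (intro h.H.commutator_eq_one_imp_commute) auto
qed

lemma coset_pow_mult_distrib:
  assumes M: "M \<lhd> G" and a: "a \<in> carrier G" and z: "z \<in> carrier G"
    and commutators: "\<And>w. w \<in> carrier G \<Longrightarrow> commutator G a w \<in> M"
  shows "M #> (a [^] q \<otimes> z [^] q) = M #> (a \<otimes> z) [^] (q::nat)"
proof -
  interpret h: group_hom G "G Mod M" "\<lambda>x. M #> x"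
    using M by (rule r_coset_group_hom)
  have "(M #> a) \<otimes>\<^bsub>G Mod M\<^esub> (M #> z) = (M #> z) \<otimes>\<^bsub>G Mod M\<^esub> (M #> a)"
    using coset_central_in_FactGroup[OF M a commutators] z by simp
  then have "((M #> a) \<otimes>\<^bsub>G Mod M\<^esub> (M #> z)) [^]\<^bsub>G Mod M\<^esub> q =
      (M #> a) [^]\<^bsub>G Mod M\<^esub> q \<otimes>\<^bsub>G Mod M\<^esub> (M #> z) [^]\<^bsub>G Mod M\<^esub> q"
    using a z by (intro h.H.pow_mult_distrib) auto
  then show ?thesis
    using a z by (simp add: h.hom_nat_pow del: mult_FactGroup)
qed

lemma coset_conj_pow:
  assumes M: "M \<lhd> G" and a: "a \<in> carrier G" and g: "g \<in> carrier G"
    and commutators: "\<And>w. w \<in> carrier G \<Longrightarrow> commutator G a w \<in> M"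
  shows "M #> (g \<otimes> a [^] (q::nat) \<otimes> inv g) = M #> a [^] q"
proof -
  interpret h: group_hom G "G Mod M" "\<lambda>x. M #> x"
    using M by (rule r_coset_group_hom)
  have "(M #> a) \<otimes>\<^bsub>G Mod M\<^esub> (M #> g) = (M #> g) \<otimes>\<^bsub>G Mod M\<^esub> (M #> a)"
    using coset_central_in_FactGroup[OF M a commutators] g by simp
  then have comm: "(M #> g) \<otimes>\<^bsub>G Mod M\<^esub> (M #> a) [^]\<^bsub>G Mod M\<^esub> q =
      (M #> a) [^]\<^bsub>G Mod M\<^esub> q \<otimes>\<^bsub>G Mod M\<^esub> (M #> g)"
    using a g by (intro h.H.group_commutes_pow[symmetric]) auto
  have "M #> (g \<otimes> a [^] q \<otimes> inv g) =
      (M #> g) \<otimes>\<^bsub>G Mod M\<^esub> (M #> a) [^]\<^bsub>G Mod M\<^esub> q \<otimes>\<^bsub>G Mod M\<^esub> inv\<^bsub>G Mod M\<^esub> (M #> g)"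
    using a g by (simp add: h.hom_nat_pow del: mult_FactGroup)
  also have "\<dots> = (M #> a) [^]\<^bsub>G Mod M\<^esub> q \<otimes>\<^bsub>G Mod M\<^esub> ((M #> g) \<otimes>\<^bsub>G Mod M\<^esub> inv\<^bsub>G Mod M\<^esub> (M #> g))"
    unfolding comm using a g by (simp add: h.H.m_assoc del: mult_FactGroup)
  also have "\<dots> = M #> a [^] q"
    using a g by (simp add: h.hom_nat_pow del: mult_FactGroup one_FactGroup)
  finally show ?thesis .
qed

lemma powers_moduloI:
  "x \<in> carrier G \<Longrightarrow> a \<in> A \<Longrightarrow> M #> x = M #> a [^] q \<Longrightarrow> x \<in> powers_modulo G M A q"
  unfolding powers_modulo_def by blast

lemma powers_moduloE:
  assumes "x \<in> powers_modulo G M A q"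
  obtains a where "x \<in> carrier G" "a \<in> A" "M #> x = M #> a [^] q"
  using assms unfolding powers_modulo_def by blast

lemma powers_modulo_normal:
  assumes M: "M \<lhd> G" and A: "subgroup A G"
    and commutators: "\<And>a w. a \<in> A \<Longrightarrow> w \<in> carrier G \<Longrightarrow> commutator G a w \<in> M"
  shows "powers_modulo G M A q \<lhd> G"
proof -
  interpret h: group_hom G "G Mod M" "\<lambda>x. M #> x"
    using M by (rule r_coset_group_hom)
  have A_carrier: "a \<in> A \<Longrightarrow> a \<in> carrier G" for a
    by (rule subgroup.mem_carrier[OF A])
  have "subgroup (powers_modulo G M A q) G"
  proof (rule subgroupI)
    show "powers_modulo G M A q \<subseteq> carrier G"
      by (auto elim: powers_moduloE)
    have "\<one> \<in> powers_modulo G M A q"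
      using subgroup.one_closed[OF A] by (rule powers_moduloI[OF one_closed]) simp
    then show "powers_modulo G M A q \<noteq> {}"
      by blast
  next
    fix x
    assume "x \<in> powers_modulo G M A q"
    then obtain a where x: "x \<in> carrier G" and a: "a \<in> A" and x_eq: "M #> x = M #> a [^] q"
      by (rule powers_moduloE)
    have "M #> inv x = inv\<^bsub>G Mod M\<^esub> (M #> a [^] q)"
      using x by (simp add: x_eq)
    also have "\<dots> = M #> inv a [^] q"
      using A_carrier[OF a] by (simp add: nat_pow_inv)
    finally show "inv x \<in> powers_modulo G M A q"
      by (rule powers_moduloI[OF inv_closed[OF x] subgroup.m_inv_closed[OF A a]])
  next
    fix x y
    assume "x \<in> powers_modulo G M A q" "y \<in> powers_modulo G M A q"
    obtain a where x: "x \<in> carrier G" and a: "a \<in> A" and x_eq: "M #> x = M #> a [^] q"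
      using \<open>x \<in> powers_modulo G M A q\<close> by (rule powers_moduloE)
    obtain b where y: "y \<in> carrier G" and b: "b \<in> A" and y_eq: "M #> y = M #> b [^] q"
      using \<open>y \<in> powers_modulo G M A q\<close> by (rule powers_moduloE)
    have "M #> (x \<otimes> y) = M #> (a [^] q \<otimes> b [^] q)"
      using x y A_carrier[OF a] A_carrier[OF b] by (simp add: x_eq y_eq del: mult_FactGroup)
    also have "\<dots> = M #> (a \<otimes> b) [^] q"
      using A_carrier[OF a] A_carrier[OF b] commutators[OF a] by (rule coset_pow_mult_distrib[OF M])
    finally show "x \<otimes> y \<in> powers_modulo G M A q"
      by (rule powers_moduloI[OF m_closed[OF x y] subgroup.m_closed[OF A a b]])
  qed
  then show ?thesis
  proof (rule normal_invI)
    fix g x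
    assume g: "g \<in> carrier G" and "x \<in> powers_modulo G M A q"
    obtain a where x: "x \<in> carrier G" and a: "a \<in> A" and x_eq: "M #> x = M #> a [^] q"
      using \<open>x \<in> powers_modulo G M A q\<close> by (rule powers_moduloE)
    have "M #> (g \<otimes> x \<otimes> inv g) = M #> (g \<otimes> a [^] q \<otimes> inv g)"
      using g x A_carrier[OF a] by (simp add: x_eq del: mult_FactGroup)
    also have "\<dots> = M #> a [^] q"
      using A_carrier[OF a] g commutators[OF a] by (rule coset_conj_pow[OF M])
    finally show "g \<otimes> x \<otimes> inv g \<in> powers_modulo G M A q"
      using g x by (intro powers_moduloI[OF _ a]) simp_all
  qed
qed

lemma commutator_congruent_power:
  assumes M: "M \<lhd> G" and x: "x \<in> carrier G" and a: "a \<in> carrier G" and y: "y \<in> carrier G"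
    and quotient_central_mod: "\<And>w. w \<in> carrier G \<Longrightarrow> commutator G (x \<otimes> inv (a [^] q)) w \<in> M"
    and commutator_central_mod: "\<And>w. w \<in> carrier G \<Longrightarrow> commutator G (commutator G a y) w \<in> M"
  shows "M #> commutator G x y = M #> commutator G a y [^] (q::nat)"
proof -
  interpret h: group_hom G "G Mod M" "\<lambda>x. M #> x"
    using M by (rule r_coset_group_hom)
  define m where "m = x \<otimes> inv (a [^] q)"
  have m: "m \<in> carrier G"
    using x a by (simp add: m_def)
  have x_eq: "x = m \<otimes> a [^] q"
    using x a by (simp add: m_def m_assoc)
  have "M #> commutator G x y =
      commutator (G Mod M) ((M #> m) \<otimes>\<^bsub>G Mod M\<^esub> (M #> a) [^]\<^bsub>G Mod M\<^esub> q) (M #> y)"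
    using m a y by (simp add: x_eq h.hom_commutator h.hom_nat_pow del: mult_FactGroup)
  also have "\<dots> = commutator (G Mod M) ((M #> a) [^]\<^bsub>G Mod M\<^esub> q) (M #> y)"
    using m a y coset_central_in_FactGroup[OF M m quotient_central_mod[folded m_def]]
    by (intro h.H.commutator_central_mult_left) auto
  also have "\<dots> = commutator (G Mod M) (M #> a) (M #> y) [^]\<^bsub>G Mod M\<^esub> q"
    using a y coset_central_in_FactGroup[OF M _ commutator_central_mod]
    by (intro h.H.commutator_pow_left) (auto simp: h.hom_commutator[symmetric] simp del: mult_FactGroup)
  also have "\<dots> = M #> commutator G a y [^] q"
    using a y by (simp add: h.hom_commutator h.hom_nat_pow del: mult_FactGroup)
  finally show ?thesis .
qed

lemma commutator_in_powers_modulo_lower_central: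
  assumes x: "x \<in> powers_modulo G (lower_central G (Suc k)) (lower_central G k) q"
    and y: "y \<in> carrier G"
  shows "commutator G x y \<in>
    powers_modulo G (lower_central G (Suc (Suc k))) (lower_central G (Suc k)) q"
proof -
  obtain a where x_carrier: "x \<in> carrier G" and a: "a \<in> lower_central G k"
    and x_eq: "lower_central G (Suc k) #> x = lower_central G (Suc k) #> a [^] q"
    using x by (rule powers_moduloE)
  have a_carrier: "a \<in> carrier G"
    using a lower_central_subset by blast
  have m: "x \<otimes> inv (a [^] q) \<in> lower_central G (Suc k)"
    using x_eq rcos_eq_iff_mult_inv[OF normal_imp_subgroup[OF lower_central_normal]
        x_carrier nat_pow_closed[OF a_carrier]]
    by blast
  have c: "commutator G a y \<in> lower_central G (Suc k)"
    using a y by (rule commutator_in_lower_central)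
  have "lower_central G (Suc (Suc k)) #> commutator G x y =
      lower_central G (Suc (Suc k)) #> commutator G a y [^] q"
    using commutator_in_lower_central[OF m] commutator_in_lower_central[OF c]
    by (rule commutator_congruent_power[OF lower_central_normal x_carrier a_carrier y])
  then show ?thesis
    using x_carrier y c by (intro powers_moduloI) auto
qed

lemma powers_modulo_lower_central_normal:
  assumes "M \<lhd> G" "lower_central G (Suc k) \<subseteq> M"
  shows "powers_modulo G M (lower_central G k) q \<lhd> G"
  using assms commutator_in_lower_central
  by (intro powers_modulo_normal normal_imp_subgroup[OF lower_central_normal]) blast+

lemma powers_modulo_mono:
  assumes N: "subgroup N G" and M: "subgroup M G" and "N \<subseteq> M" and A: "A \<subseteq> carrier G"
  shows "powers_modulo G N A q \<subseteq> powers_modulo G M A q"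
proof
  fix x
  assume "x \<in> powers_modulo G N A q"
  then obtain a where x: "x \<in> carrier G" and a: "a \<in> A" and x_eq: "N #> x = N #> a [^] q"
    by (rule powers_moduloE)
  have a_pow: "a [^] q \<in> carrier G"
    using a A by blast
  have "x \<otimes> inv (a [^] q) \<in> N"
    using x_eq rcos_eq_iff_mult_inv[OF N x a_pow] by blast
  then have "M #> x = M #> a [^] q"
    using rcos_eq_iff_mult_inv[OF M x a_pow] \<open>N \<subseteq> M\<close> by blast
  then show "x \<in> powers_modulo G M A q"
    using x a by (rule powers_moduloI[rotated 2])
qed

lemma powers_modulo_mult_power:
  assumes M: "M \<lhd> G" and A: "A \<subseteq> carrier G"
    and commutators: "\<And>a w. a \<in> A \<Longrightarrow> w \<in> carrier G \<Longrightarrow> commutator G a w \<in> M"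
    and y: "y \<in> powers_modulo G M A q" and z: "z \<in> carrier G"
  shows "y \<otimes> z [^] q \<in> powers_modulo G M (carrier G) q"
proof -
  interpret h: group_hom G "G Mod M" "\<lambda>x. M #> x"
    using M by (rule r_coset_group_hom)
  obtain a where y_carrier: "y \<in> carrier G" and a: "a \<in> A" and y_eq: "M #> y = M #> a [^] q"
    using y by (rule powers_moduloE)
  have a_carrier: "a \<in> carrier G"
    using a A by blast
  have "M #> (y \<otimes> z [^] q) = M #> (a [^] q \<otimes> z [^] q)"
    using y_carrier a_carrier z by (simp add: y_eq del: mult_FactGroup)
  also have "\<dots> = M #> (a \<otimes> z) [^] q"
    using a_carrier z commutators[OF a] by (rule coset_pow_mult_distrib[OF M])
  finally show ?thesis
    by (rule powers_moduloI[OF m_closed[OF y_carrier nat_pow_closed[OF z]] m_closed[OF a_carrier z]])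
qed

lemma commutator_consistent:
  "subgroup H G \<Longrightarrow> x \<in> H \<Longrightarrow> y \<in> H \<Longrightarrow> commutator (G\<lparr>carrier := H\<rparr>) x y = commutator G x y"
  by (simp add: commutator_def m_inv_consistent)

lemma lower_central_subgroup_Suc:
  assumes H: "subgroup H G"
  shows "lower_central (G\<lparr>carrier := H\<rparr>) (Suc k) =
    generate G {commutator G x y | x y. x \<in> lower_central (G\<lparr>carrier := H\<rparr>) k \<and> y \<in> H}"
proof -
  interpret H: group "G\<lparr>carrier := H\<rparr>"
    using H is_group by (rule subgroup.subgroup_is_group)
  have sub: "lower_central (G\<lparr>carrier := H\<rparr>) k \<subseteq> H"
    using H.lower_central_subset by simp
  have eq: "commutator (G\<lparr>carrier := H\<rparr>) x y = commutator G x y"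
    if "x \<in> lower_central (G\<lparr>carrier := H\<rparr>) k" "y \<in> H" for x y
    using that sub by (intro commutator_consistent[OF H]) auto
  have closed: "commutator G x y \<in> H"
    if "x \<in> lower_central (G\<lparr>carrier := H\<rparr>) k" "y \<in> H" for x y
    using H.commutator_closed[of x y] that sub eq by auto
  have "{commutator (G\<lparr>carrier := H\<rparr>) x y | x y. x \<in> lower_central (G\<lparr>carrier := H\<rparr>) k \<and> y \<in> H} =
     {commutator G x y | x y. x \<in> lower_central (G\<lparr>carrier := H\<rparr>) k \<and> y \<in> H}"
    using eq by (intro Collect_cong iffI) (elim exE conjE; metis)+
  moreover have "{commutator G x y | x y. x \<in> lower_central (G\<lparr>carrier := H\<rparr>) k \<and> y \<in> H} \<subseteq> H"
    using closed by blast
  ultimately show ?thesis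
    using generate_consistent[OF _ H] by (simp add: lower_central_Suc)
qed

lemma power_subgroup_is_subgroup: "subgroup (power_subgroup G q) G"
  unfolding power_subgroup_def by (rule generate_is_subgroup) auto

lemma power_subgroup_pow_Suc_subset:
  "power_subgroup G (q ^ Suc c) \<subseteq> power_subgroup (G\<lparr>carrier := power_subgroup G q\<rparr>) (q ^ c)"
proof -
  define H where "H = power_subgroup G q"
  have H: "subgroup H G"
    unfolding H_def by (rule power_subgroup_is_subgroup)
  interpret H: group "G\<lparr>carrier := H\<rparr>"
    using H is_group by (rule subgroup.subgroup_is_group)
  have powers_in_H: "{x [^] (q ^ c) | x. x \<in> H} \<subseteq> H"
    using H.nat_pow_closed by (auto simp: nat_pow_consistent[symmetric])
  have "power_subgroup (G\<lparr>carrier := H\<rparr>) (q ^ c) = generate G {x [^] (q ^ c) | x. x \<in> H}"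
    unfolding power_subgroup_def using generate_consistent[OF powers_in_H H]
    by (simp add: nat_pow_consistent[symmetric])
  moreover have "power_subgroup G (q ^ Suc c) \<subseteq> generate G {x [^] (q ^ c) | x. x \<in> H}"
    unfolding power_subgroup_def
  proof (rule generate_subgroup_incl)
    show "subgroup (generate G {x [^] (q ^ c) | x. x \<in> H}) G"
      using powers_in_H subgroup.subset[OF H] by (intro generate_is_subgroup) blast
    have "x [^] (q ^ Suc c) = (x [^] q) [^] (q ^ c)" if "x \<in> carrier G" for x
      using that by (simp add: nat_pow_pow)
    moreover have "x [^] q \<in> H" if "x \<in> carrier G" for x
      unfolding H_def power_subgroup_def using that by (blast intro: generate.incl)
    ultimately show "{x [^] (q ^ Suc c) | x. x \<in> carrier G} \<subseteq> generate G {x [^] (q ^ c) | x. x \<in> H}"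
      by (blast intro: generate.incl)
  qed
  ultimately show ?thesis
    by (simp add: H_def)
qed

lemma lower_central_power_subgroup:
  "lower_central (G\<lparr>carrier := power_subgroup G q\<rparr>) k \<subseteq>
    powers_modulo G (lower_central G (Suc k)) (lower_central G k) q"
proof (induction k)
  case 0
  have "power_subgroup G q \<subseteq> powers_modulo G (lower_central G 1) (lower_central G 0) q"
    unfolding power_subgroup_def
  proof (rule generate_subgroup_incl)
    show "subgroup (powers_modulo G (lower_central G 1) (lower_central G 0) q) G"
      using lower_central_normal by (intro normal_imp_subgroup powers_modulo_lower_central_normal) auto
    show "{x [^] q | x. x \<in> carrier G} \<subseteq> powers_modulo G (lower_central G 1) (lower_central G 0) q"
      by (auto intro: powers_moduloI)
  qed
  then show ?case
    by simp
next
  case (Suc k)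
  let ?H = "power_subgroup G q"
  have H: "subgroup ?H G"
    by (rule power_subgroup_is_subgroup)
  show ?case
    unfolding lower_central_subgroup_Suc[OF H]
  proof (rule generate_subgroup_incl)
    show "subgroup (powers_modulo G (lower_central G (Suc (Suc k))) (lower_central G (Suc k)) q) G"
      using lower_central_normal by (intro normal_imp_subgroup powers_modulo_lower_central_normal) auto
    show "{commutator G x y | x y. x \<in> lower_central (G\<lparr>carrier := ?H\<rparr>) k \<and> y \<in> ?H} \<subseteq>
        powers_modulo G (lower_central G (Suc (Suc k))) (lower_central G (Suc k)) q"
      using Suc.IH subgroup.mem_carrier[OF H] commutator_in_powers_modulo_lower_central by blast
  qed
qed

lemma lower_central_power_subgroup_subset:
  assumes "M \<lhd> G" "lower_central G (Suc c) \<subseteq> M"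
  shows "lower_central (G\<lparr>carrier := power_subgroup G q\<rparr>) c \<subseteq> powers_modulo G M (lower_central G c) q"
  using lower_central_power_subgroup assms lower_central_subset
    powers_modulo_mono[OF normal_imp_subgroup[OF lower_central_normal] normal_imp_subgroup]
  by blast

lemma powers_modulo_consistent:
  assumes "H \<subseteq> carrier G"
  shows "powers_modulo (G\<lparr>carrier := H\<rparr>) N A q = powers_modulo G N A q \<inter> H"
  using assms by (auto simp: powers_modulo_def nat_pow_consistent[symmetric])

lemma power_subgroup_subset_powers_modulo_Suc:
  fixes q :: nat
  defines "Gq \<equiv> G\<lparr>carrier := power_subgroup G q\<rparr>"
  assumes IH: "\<And>N. N \<lhd> Gq \<Longrightarrow> lower_central Gq c \<subseteq> N \<Longrightarrow>
      power_subgroup Gq (q ^ c) \<subseteq> powers_modulo Gq N (carrier Gq) q"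
    and M: "M \<lhd> G" and lower_central_M: "lower_central G (Suc c) \<subseteq> M"
  shows "power_subgroup G (q ^ Suc c) \<subseteq> powers_modulo G M (carrier G) q"
proof
  define H where "H = power_subgroup G q"
  define T where "T = powers_modulo G M (lower_central G c) q"
  have H: "subgroup H G"
    unfolding H_def by (rule power_subgroup_is_subgroup)
  have T: "T \<lhd> G"
    unfolding T_def using M lower_central_M by (rule powers_modulo_lower_central_normal)
  interpret Gq: group Gq
    unfolding Gq_def H_def[symmetric] using H is_group by (rule subgroup.subgroup_is_group)
  have "lower_central Gq c \<subseteq> T \<inter> H"
    using lower_central_power_subgroup_subset[OF M lower_central_M] Gq.lower_central_subset
    unfolding Gq_def T_def H_def by auto
  then have "power_subgroup Gq (q ^ c) \<subseteq> powers_modulo G (T \<inter> H) H q"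
    using IH normal_Int_subgroup[OF H T] powers_modulo_consistent[OF subgroup.subset[OF H]]
    by (auto simp: Gq_def H_def)
  fix g
  assume "g \<in> power_subgroup G (q ^ Suc c)"
  then have "g \<in> powers_modulo G (T \<inter> H) H q"
    using \<open>power_subgroup Gq (q ^ c) \<subseteq> _\<close> power_subgroup_pow_Suc_subset unfolding Gq_def H_def by blast
  then obtain z where g: "g \<in> carrier G" and z: "z \<in> H" and g_eq: "(T \<inter> H) #> g = (T \<inter> H) #> z [^] q"
    by (rule powers_moduloE)
  have z_carrier: "z \<in> carrier G"
    using z subgroup.mem_carrier[OF H] by blast
  have "g \<otimes> inv (z [^] q) \<in> T"
    using g_eq rcos_eq_iff_mult_inv[OF subgroups_Inter_pair[OF normal_imp_subgroup[OF T] H]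
        g nat_pow_closed[OF z_carrier]]
    by blast
  moreover have "commutator G a w \<in> M" if "a \<in> lower_central G c" "w \<in> carrier G" for a w
    using lower_central_M commutator_in_lower_central[OF that] by blast
  ultimately have "g \<otimes> inv (z [^] q) \<otimes> z [^] q \<in> powers_modulo G M (carrier G) q"
    unfolding T_def using M lower_central_subset z_carrier by (intro powers_modulo_mult_power)
  then show "g \<in> powers_modulo G M (carrier G) q"
    using g z_carrier by (simp add: m_assoc)
qed

lemma power_subgroup_subset_powers_modulo_0:
  assumes M: "M \<lhd> G" and "carrier G \<subseteq> M"
  shows "power_subgroup G (q ^ 0) \<subseteq> powers_modulo G M (carrier G) q"
proof
  fix g
  assume "g \<in> power_subgroup G (q ^ 0)"
  then have g: "g \<in> carrier G"
    using subgroup.mem_carrier[OF power_subgroup_is_subgroup] by blast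
  have "M #> g = M"
    using g assms by (intro subgroup.rcos_const[OF normal_imp_subgroup[OF M] is_group]) auto
  also have "\<dots> = M #> \<one> [^] q"
    using subgroup.subset[OF normal_imp_subgroup[OF M]] by simp
  finally show "g \<in> powers_modulo G M (carrier G) q"
    by (rule powers_moduloI[OF g one_closed])
qed

end

lemma power_subgroup_subset_powers_modulo:
  assumes "group G" "M \<lhd> G" "lower_central G c \<subseteq> M"
  shows "power_subgroup G (q ^ c) \<subseteq> powers_modulo G M (carrier G) q"
  using assms
proof (induction c arbitrary: G M)
  case 0
  then show ?case
    using group.power_subgroup_subset_powers_modulo_0[of G M q] by simp
next
  case (Suc c)
  have "group (G\<lparr>carrier := power_subgroup G q\<rparr>)"
    using group.power_subgroup_is_subgroup[OF Suc.prems(1)] Suc.prems(1)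
    by (rule subgroup.subgroup_is_group)
  show ?case
  proof (rule group.power_subgroup_subset_powers_modulo_Suc[OF Suc.prems(1) _ Suc.prems(2,3)])
    fix N
    assume "N \<lhd> G\<lparr>carrier := power_subgroup G q\<rparr>"
      and "lower_central (G\<lparr>carrier := power_subgroup G q\<rparr>) c \<subseteq> N"
    then show "power_subgroup (G\<lparr>carrier := power_subgroup G q\<rparr>) (q ^ c) \<subseteq>
        powers_modulo (G\<lparr>carrier := power_subgroup G q\<rparr>) N (carrier (G\<lparr>carrier := power_subgroup G q\<rparr>)) q"
      by (rule Suc.IH[OF \<open>group (G\<lparr>carrier := power_subgroup G q\<rparr>)\<close>])
  qed
qed

lemma (in monoid) infinite_height_iff:
  assumes x: "x \<in> carrier G"
  shows "infinite_height G p x \<longleftrightarrow> (\<forall>n. \<exists>h\<in>carrier G. x = h [^] (p ^ n))"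
proof -
  define P where "P n \<longleftrightarrow> (\<exists>h\<in>carrier G. x = h [^] (p ^ n))" for n
  have P_0: "P 0"
    using x by (auto simp: P_def)
  have P_le: "P n" if "P m" "n \<le> m" for m n
  proof -
    obtain h where h: "h \<in> carrier G" "x = h [^] (p ^ m)"
      using \<open>P m\<close> by (auto simp: P_def)
    have "x = (h [^] (p ^ (m - n))) [^] (p ^ n)"
      using h \<open>n \<le> m\<close> by (simp add: nat_pow_pow power_add[symmetric])
    then show ?thesis
      using h by (auto simp: P_def)
  qed
  have "(\<not> (\<exists>n. P n \<and> (\<forall>m. P m \<longrightarrow> m \<le> n))) \<longleftrightarrow> (\<forall>n. P n)"
  proof
    assume no_greatest: "\<not> (\<exists>n. P n \<and> (\<forall>m. P m \<longrightarrow> m \<le> n))"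
    show "\<forall>n. P n"
    proof (rule ccontr)
      assume "\<not> (\<forall>n. P n)"
      then obtain n where "\<not> P n"
        by blast
      then have "\<forall>m. P m \<longrightarrow> m \<le> n"
        using P_le nat_le_linear by blast
      then show False
        using no_greatest Nat.ex_has_greatest_nat[of P 0 n] P_0 by blast
    qed
  next
    assume "\<forall>n. P n"
    then show "\<not> (\<exists>n. P n \<and> (\<forall>m. P m \<longrightarrow> m \<le> n))"
      using Suc_n_not_le_n by blast
  qed
  then show ?thesis
    by (simp add: infinite_height_def P_def)
qed

context group
begin

lemma power_subgroup_subset_powers:
  assumes "lower_central G c = {\<one>}"
  shows "power_subgroup G (q ^ c) \<subseteq> {z [^] q | z. z \<in> carrier G}"
proof
  fix g
  assume "g \<in> power_subgroup G (q ^ c)"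
  then have "g \<in> powers_modulo G {\<one>} (carrier G) q"
    using power_subgroup_subset_powers_modulo[OF is_group one_is_normal] assms by blast
  then obtain z where "g \<in> carrier G" "z \<in> carrier G" "{\<one>} #> g = {\<one>} #> z [^] q"
    by (rule powers_moduloE)
  then show "g \<in> {z [^] q | z. z \<in> carrier G}"
    by (auto simp: r_coset_def)
qed

lemma conj_nat_pow:
  assumes "g \<in> carrier G" "h \<in> carrier G"
  shows "g \<otimes> h [^] (n::nat) \<otimes> inv g = (g \<otimes> h \<otimes> inv g) [^] n"
proof (induction n)
  case 0
  then show ?case
    using assms by simp
next
  case (Suc n)
  have "g \<otimes> h [^] Suc n \<otimes> inv g = (g \<otimes> h [^] n \<otimes> inv g) \<otimes> (g \<otimes> h \<otimes> inv g)"
    using assms by (simp add: m_assoc)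
  then show ?case
    by (simp add: Suc)
qed

lemma mult_powers_is_power:
  fixes q :: nat
  assumes "lower_central G c = {\<one>}" "u \<in> carrier G" "v \<in> carrier G"
  shows "\<exists>z\<in>carrier G. u [^] (q ^ c) \<otimes> v [^] (q ^ c) = z [^] q"
proof -
  have "u [^] (q ^ c) \<otimes> v [^] (q ^ c) \<in> power_subgroup G (q ^ c)"
    unfolding power_subgroup_def using assms(2,3) by (blast intro: generate.eng generate.incl)
  then show ?thesis
    using power_subgroup_subset_powers[OF assms(1)] by blast
qed

lemma infinite_height_mult:
  assumes c: "lower_central G c = {\<one>}" and x: "x \<in> carrier G" and y: "y \<in> carrier G"
    and "infinite_height G p x" "infinite_height G p y"
  shows "infinite_height G p (x \<otimes> y)"
proof -
  have "\<exists>z\<in>carrier G. x \<otimes> y = z [^] (p ^ n)" for n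
  proof -
    obtain u v where "u \<in> carrier G" "x = u [^] ((p ^ n) ^ c)" "v \<in> carrier G" "y = v [^] ((p ^ n) ^ c)"
      using assms infinite_height_iff[OF x] infinite_height_iff[OF y] by (metis power_mult)
    then show ?thesis
      using mult_powers_is_power[OF c] by simp
  qed
  then show ?thesis
    using x y by (simp add: infinite_height_iff)
qed

lemma infinite_height_inv:
  assumes x: "x \<in> carrier G" and "infinite_height G p x"
  shows "infinite_height G p (inv x)"
proof -
  have "\<exists>h\<in>carrier G. inv x = h [^] (p ^ n)" for n
  proof -
    obtain h where "h \<in> carrier G" "x = h [^] (p ^ n)"
      using assms infinite_height_iff[OF x] by blast
    then show ?thesis
      by (intro bexI[of _ "inv h"]) (simp_all add: nat_pow_inv)
  qed
  then show ?thesis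
    using x by (simp add: infinite_height_iff)
qed

lemma infinite_height_conj:
  assumes g: "g \<in> carrier G" and x: "x \<in> carrier G" and "infinite_height G p x"
  shows "infinite_height G p (g \<otimes> x \<otimes> inv g)"
proof -
  have "\<exists>h\<in>carrier G. g \<otimes> x \<otimes> inv g = h [^] (p ^ n)" for n
  proof -
    obtain h where "h \<in> carrier G" "x = h [^] (p ^ n)"
      using assms infinite_height_iff[OF x] by blast
    then show ?thesis
      using g by (intro bexI[of _ "g \<otimes> h \<otimes> inv g"]) (simp_all add: conj_nat_pow)
  qed
  then show ?thesis
    using g x by (simp add: infinite_height_iff)
qed

lemma infinite_height_one: "infinite_height G p \<one>"
  by (auto simp: infinite_height_iff intro: bexI[of _ \<one>])

lemma infinite_height_normal:
  assumes "lower_central G c = {\<one>}"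
  shows "{g \<in> carrier G. infinite_height G p g} \<lhd> G"
proof (rule normal_invI)
  show "subgroup {g \<in> carrier G. infinite_height G p g} G"
    using assms by (auto intro!: subgroupI infinite_height_mult infinite_height_inv infinite_height_one)
  show "g \<otimes> x \<otimes> inv g \<in> {g \<in> carrier G. infinite_height G p g}"
    if "g \<in> carrier G" "x \<in> {g \<in> carrier G. infinite_height G p g}" for g x
    using that by (auto intro: infinite_height_conj)
qed

lemma infinite_height_in_FactGroup_eq_one:
  fixes p :: nat
  assumes c: "lower_central G c = {\<one>}"
  defines "G0 \<equiv> {g \<in> carrier G. infinite_height G p g}"
  assumes x: "x \<in> carrier (G Mod G0)" and "infinite_height (G Mod G0) p x"
  shows "x = \<one>\<^bsub>G Mod G0\<^esub>"
proof -
  have G0: "G0 \<lhd> G"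
    unfolding G0_def using c by (rule infinite_height_normal)
  interpret G0: normal G0 G
    by (rule G0)
  interpret Q: group "G Mod G0"
    by (rule G0.factorgroup_is_group)
  obtain g where g: "g \<in> carrier G" and x_eq: "x = G0 #> g"
    using x by (auto simp: carrier_FactGroup)
  have "\<exists>z\<in>carrier G. g = z [^] (p ^ n)" for n
  proof -
    obtain Y where Y: "Y \<in> carrier (G Mod G0)" and "x = Y [^]\<^bsub>G Mod G0\<^esub> (p ^ n) ^ c"
      using assms Q.infinite_height_iff[OF x] by (metis power_mult)
    moreover obtain h where h: "h \<in> carrier G" and "Y = G0 #> h"
      using Y by (auto simp: carrier_FactGroup)
    ultimately have "G0 #> g = G0 #> h [^] (p ^ n) ^ c"
      using x_eq G0.FactGroup_pow by simp
    then have "g \<otimes> inv (h [^] (p ^ n) ^ c) \<in> G0"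
      using rcos_eq_iff_mult_inv[OF G0.subgroup_axioms g nat_pow_closed[OF h]] by blast
    then obtain u where u: "u \<in> carrier G" and u_eq: "g \<otimes> inv (h [^] (p ^ n) ^ c) = u [^] (p ^ n) ^ c"
      unfolding G0_def by (metis (mono_tags, lifting) infinite_height_iff mem_Collect_eq power_mult)
    have "g = u [^] (p ^ n) ^ c \<otimes> h [^] (p ^ n) ^ c"
      using u_eq[symmetric] g h by (simp add: m_assoc)
    then show ?thesis
      using mult_powers_is_power[OF c u h] by simp
  qed
  then have "g \<in> G0"
    unfolding G0_def using g by (simp add: infinite_height_iff)
  then show ?thesis
    using x_eq G0.rcos_const[OF is_group] by simp
qed

end

theorem mainTheorem5:
  fixes G :: "('a, 'b) monoid_scheme" and p :: nat
  assumes "Factorial_Ring.prime p"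
    and "nilpotent_group G"
    and "p_group G p"
  defines "G0 \<equiv> {g \<in> carrier G. infinite_height G p g}"
  shows "G0 \<lhd> G \<and>
         (\<forall>x \<in> carrier (G Mod G0). infinite_height (G Mod G0) p x \<longrightarrow> x = \<one>\<^bsub>G Mod G0\<^esub>)"
proof -
  have G: "group G"
    using assms(2) by (simp add: nilpotent_group_def)
  obtain c where c: "lower_central G c = {\<one>\<^bsub>G\<^esub>}"
    using assms(2) by (auto simp: nilpotent_group_def lower_central_def)
  show ?thesis
    unfolding G0_def
    using group.infinite_height_normal[OF G c] group.infinite_height_in_FactGroup_eq_one[OF G c]
    by blast
qed

end
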